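(* The subgroup of $G_2=\mathrm{GL}_2(\mathbb{F}_q)$ generated by $P_2^\ell$ and $\overline{P}_2^\ell$ is $G_2^\ell$.
   Context: $p$ is a prime, $q$ a power of $p$, $\ell\ne p$ a prime. $\mathbb{F}_q^{\times,\ell}$ is the subgroup of elements of $\mathbb{F}_q^\times$ of order prime to $\ell$, $G_2^\ell=\det^{-1}(\mathbb{F}_q^{\times,\ell})\subset G_2$. $P_2=\{\begin{psmallmatrix}a&b\\0&1\end{psmallmatrix}\}$ is the mirabolic subgroup, $\overline{P}_2=\{\begin{psmallmatrix}a&0\\c&1\end{psmallmatrix}\}$ the opposite mirabolic subgroup, $P_2^\ell=P_2\cap G_2^\ell$ and $\overline{P}_2^\ell=\overline{P}_2\cap G_2^\ell$. *)

theory Defs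
  imports "HOL-Analysis.Analysis" "HOL-Algebra.Generated_Groups"
begin

text \<open>2x2 matrices over a field: type 'a^2^2, entries A$i$j with i,j in {1,2}.\<close>

definition GL2 :: "('a::field ^ 2 ^ 2) monoid" where
  "GL2 = \<lparr> carrier = {A. det A \<noteq> 0}, mult = (\<lambda>A B. A ** B), one = mat 1 \<rparr>"

definition mult_order :: "'a::field \<Rightarrow> nat" where
  "mult_order x = (LEAST n. 0 < n \<and> x ^ n = 1)"

definition units_prime_to :: "nat \<Rightarrow> 'a::field set" where
  "units_prime_to l = {x. x \<noteq> 0 \<and> coprime (mult_order x) l}"

definition G2l :: "nat \<Rightarrow> ('a::field ^ 2 ^ 2) set" where
  "G2l l = {A. det A \<noteq> 0 \<and> det A \<in> units_prime_to l}"

definition P2 :: "('a::field ^ 2 ^ 2) set" where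
  "P2 = {A. A$1$1 \<noteq> 0 \<and> A$2$1 = 0 \<and> A$2$2 = 1}"

definition P2bar :: "('a::field ^ 2 ^ 2) set" where
  "P2bar = {A. A$1$1 \<noteq> 0 \<and> A$1$2 = 0 \<and> A$2$2 = 1}"

end

theory Submission
  imports Defs
begin

text \<open>Every matrix with nonzero lower-left entry c factors as
  (1 x; 0 1) (\<delta> 0; c 1) (1 y; 0 1) with \<delta> its determinant; the outer factors lie in P2 and
  have determinant 1, the middle one lies in P2bar and has determinant \<delta>. A matrix with
  c = 0 is moved into this case by a lower unipotent factor, which also lies in P2bar.
  Conversely G2l l is a subgroup because its determinant condition is closed under products
  and inverses: the order of x y divides the product of the orders of x and y, and the order
  of inverse x divides that of x.\<close>

lemma mult_order_exists:
  fixes x :: "'a::{finite,field}"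
  assumes "x \<noteq> 0"
  shows "\<exists>n>0. x ^ n = 1"
proof -
  have "\<not> inj (\<lambda>n::nat. x ^ n)"
    using finite_imageD[of "\<lambda>n::nat. x ^ n" UNIV] by auto
  then obtain i j :: nat where "i < j" "x ^ i = x ^ j"
    unfolding inj_def by (metis linorder_neqE_nat)
  moreover have "x ^ j = x ^ i * x ^ (j - i)"
    using \<open>i < j\<close> by (simp flip: power_add)
  ultimately have "x ^ (j - i) = 1"
    using assms by simp
  with \<open>i < j\<close> show ?thesis
    by (intro exI[of _ "j - i"]) simp
qed

lemma
  fixes x :: "'a::{finite,field}"
  assumes "x \<noteq> 0"
  shows mult_order_pos: "0 < mult_order x"
    and power_mult_order: "x ^ mult_order x = 1"
  using LeastI_ex[OF mult_order_exists[OF assms]] unfolding mult_order_def by auto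

lemma power_eq_1_iff_mult_order_dvd:
  fixes x :: "'a::{finite,field}"
  assumes "x \<noteq> 0"
  shows "x ^ n = 1 \<longleftrightarrow> mult_order x dvd n"
proof
  let ?o = "mult_order x"
  assume "x ^ n = 1"
  have "x ^ n = (x ^ ?o) ^ (n div ?o) * x ^ (n mod ?o)"
    by (simp flip: power_mult power_add)
  with \<open>x ^ n = 1\<close> have "x ^ (n mod ?o) = 1"
    using power_mult_order[OF assms] by simp
  moreover have "n mod ?o < ?o"
    using mult_order_pos[OF assms] by simp
  ultimately have "n mod ?o = 0"
    using not_less_Least[of "n mod ?o" "\<lambda>k. 0 < k \<and> x ^ k = 1"]
    unfolding mult_order_def by auto
  then show "?o dvd n"
    by (simp add: dvd_eq_mod_eq_0)
next
  assume "mult_order x dvd n"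
  then show "x ^ n = 1"
    using power_mult_order[OF assms] by (auto simp: power_mult)
qed

lemma one_in_units_prime_to: "(1::'a::{finite,field}) \<in> units_prime_to l"
  using power_eq_1_iff_mult_order_dvd[of "1::'a" 1]
  by (simp add: units_prime_to_def)

lemma mult_in_units_prime_to:
  fixes x y :: "'a::{finite,field}"
  assumes "x \<in> units_prime_to l" "y \<in> units_prime_to l"
  shows "x * y \<in> units_prime_to l"
proof -
  have "x \<noteq> 0" "y \<noteq> 0"
    using assms by (auto simp: units_prime_to_def)
  have "(x * y) ^ (mult_order x * mult_order y)
      = (x ^ mult_order x) ^ mult_order y * (y ^ mult_order y) ^ mult_order x"
    unfolding power_mult_distrib power_mult[symmetric] by (simp add: mult.commute)
  also have "\<dots> = 1"
    using power_mult_order[OF \<open>x \<noteq> 0\<close>] power_mult_order[OF \<open>y \<noteq> 0\<close>] by simp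
  finally have "mult_order (x * y) dvd mult_order x * mult_order y"
    using power_eq_1_iff_mult_order_dvd[of "x * y"] \<open>x \<noteq> 0\<close> \<open>y \<noteq> 0\<close> by simp
  moreover have "coprime (mult_order x * mult_order y) l"
    using assms by (simp add: units_prime_to_def)
  ultimately have "coprime (mult_order (x * y)) l"
    by (rule coprime_divisors[OF _ dvd_refl])
  with \<open>x \<noteq> 0\<close> \<open>y \<noteq> 0\<close> show ?thesis
    by (simp add: units_prime_to_def)
qed

lemma inverse_in_units_prime_to:
  fixes x :: "'a::{finite,field}"
  assumes "x \<in> units_prime_to l"
  shows "inverse x \<in> units_prime_to l"
proof -
  have "x \<noteq> 0"
    using assms by (simp add: units_prime_to_def)
  have "inverse x ^ mult_order x = 1"
    using power_mult_order[OF \<open>x \<noteq> 0\<close>] by (simp add: power_inverse)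
  then have "mult_order (inverse x) dvd mult_order x"
    using power_eq_1_iff_mult_order_dvd[of "inverse x"] \<open>x \<noteq> 0\<close> by simp
  moreover have "coprime (mult_order x) l"
    using assms by (simp add: units_prime_to_def)
  ultimately have "coprime (mult_order (inverse x)) l"
    by (rule coprime_divisors[OF _ dvd_refl])
  with \<open>x \<noteq> 0\<close> show ?thesis
    by (simp add: units_prime_to_def)
qed

lemma carrier_GL2: "carrier GL2 = {A. det A \<noteq> 0}"
  and mult_GL2 [simp]: "A \<otimes>\<^bsub>GL2\<^esub> B = A ** B"
  and one_GL2: "\<one>\<^bsub>GL2\<^esub> = mat 1"
  by (simp_all add: GL2_def)

lemma GL2_group: "group (GL2 :: ('a::field ^ 2 ^ 2) monoid)"
proof (rule groupI)
  fix A :: "'a ^ 2 ^ 2"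
  assume "A \<in> carrier GL2"
  then have "invertible A"
    by (simp add: carrier_GL2 invertible_det_nz)
  then obtain B where B: "B ** A = mat 1"
    unfolding invertible_def by blast
  then have "det B * det A = 1"
    by (metis det_I det_mul)
  with B show "\<exists>B \<in> carrier GL2. B \<otimes>\<^bsub>GL2\<^esub> A = \<one>\<^bsub>GL2\<^esub>"
    by (intro bexI[of _ B]) (auto simp: carrier_GL2 one_GL2)
qed (auto simp: carrier_GL2 one_GL2 det_mul matrix_mul_assoc)

lemma det_inv_GL2:
  fixes A :: "'a::field ^ 2 ^ 2"
  assumes "A \<in> carrier GL2"
  shows "det (inv\<^bsub>GL2\<^esub> A) = inverse (det A)"
proof -
  interpret group "GL2 :: ('a ^ 2 ^ 2) monoid" by (rule GL2_group)
  have "det (inv\<^bsub>GL2\<^esub> A) * det A = 1"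
    using l_inv[OF assms] by (metis det_I det_mul mult_GL2 one_GL2)
  then show ?thesis
    by (metis inverse_unique mult.commute)
qed

lemma G2l_subgroup: "subgroup (G2l l) (GL2 :: ('a::{finite,field} ^ 2 ^ 2) monoid)"
proof (rule group.subgroupI[OF GL2_group])
  show "G2l l \<subseteq> carrier (GL2 :: ('a ^ 2 ^ 2) monoid)"
    by (auto simp: G2l_def carrier_GL2)
  have "mat 1 \<in> (G2l l :: ('a ^ 2 ^ 2) set)"
    using one_in_units_prime_to by (simp add: G2l_def)
  then show "G2l l \<noteq> ({} :: ('a ^ 2 ^ 2) set)"
    by blast
next
  fix A :: "'a ^ 2 ^ 2"
  assume "A \<in> G2l l"
  then show "inv\<^bsub>GL2\<^esub> A \<in> G2l l"
    using inverse_in_units_prime_to[of "det A" l]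
    by (simp add: G2l_def det_inv_GL2 carrier_GL2)
next
  fix A B :: "'a ^ 2 ^ 2"
  assume "A \<in> G2l l" "B \<in> G2l l"
  then show "A \<otimes>\<^bsub>GL2\<^esub> B \<in> G2l l"
    using mult_in_units_prime_to[of "det A" l "det B"]
    by (simp add: G2l_def det_mul units_prime_to_def)
qed

definition mat2 :: "'a::field \<Rightarrow> 'a \<Rightarrow> 'a \<Rightarrow> 'a \<Rightarrow> 'a ^ 2 ^ 2" where
  "mat2 a b c d = (\<chi> i j. if i = 1 then (if j = 1 then a else b) else (if j = 1 then c else d))"

lemma mat2_nth [simp]:
  "mat2 a b c d $ 1 $ 1 = a" "mat2 a b c d $ 1 $ 2 = b"
  "mat2 a b c d $ 2 $ 1 = c" "mat2 a b c d $ 2 $ 2 = d"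
  by (simp_all add: mat2_def)

lemma mat2_cases:
  obtains a b c d where "A = mat2 a b c d"
proof
  show "A = mat2 (A$1$1) (A$1$2) (A$2$1) (A$2$2)"
    by (simp add: vec_eq_iff forall_2)
qed

lemma mat2_mult:
  "mat2 a b c d ** mat2 e f g h = mat2 (a*e + b*g) (a*f + b*h) (c*e + d*g) (c*f + d*h)"
  by (simp add: vec_eq_iff forall_2 matrix_matrix_mult_def sum_2)

lemma det_mat2: "det (mat2 a b c d) = a*d - b*c"
  by (simp add: det_2)

lemma mat2_eq_upper_lower_upper:
  assumes "c \<noteq> 0"
  shows "mat2 a b c d =
    mat2 1 ((a - det (mat2 a b c d)) / c) 0 1 ** mat2 (det (mat2 a b c d)) 0 c 1
      ** mat2 1 ((d - 1) / c) 0 1"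
  using assms by (simp add: mat2_mult det_mat2 field_simps)

lemma generate_GL2_mult:
  "A \<in> generate GL2 X \<Longrightarrow> B \<in> generate GL2 X \<Longrightarrow> A ** B \<in> generate GL2 X"
  using generate.eng[of A GL2 X B] by simp

lemma upper_unipotent_in_generate:
  fixes x :: "'a::{finite,field}"
  shows "mat2 1 x 0 1 \<in> generate GL2 ((P2 \<inter> G2l l) \<union> (P2bar \<inter> G2l l))"
  by (intro generate.incl) (simp add: P2_def G2l_def det_mat2 one_in_units_prime_to)

lemma lower_mirabolic_in_generate:
  fixes \<alpha> c :: "'a::{finite,field}"
  shows "\<alpha> \<in> units_prime_to l \<Longrightarrow>
    mat2 \<alpha> 0 c 1 \<in> generate GL2 ((P2 \<inter> G2l l) \<union> (P2bar \<inter> G2l l))"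
  by (intro generate.incl) (simp add: P2bar_def G2l_def det_mat2 units_prime_to_def)

lemma G2l_in_generate_if_lower_left_nonzero:
  fixes a b c d :: "'a::{finite,field}"
  assumes "mat2 a b c d \<in> G2l l" "c \<noteq> 0"
  shows "mat2 a b c d \<in> generate GL2 ((P2 \<inter> G2l l) \<union> (P2bar \<inter> G2l l))"
proof -
  have "det (mat2 a b c d) \<in> units_prime_to l"
    using assms(1) by (simp add: G2l_def)
  then show ?thesis
    by (subst mat2_eq_upper_lower_upper[OF assms(2)])
      (intro generate_GL2_mult upper_unipotent_in_generate lower_mirabolic_in_generate)
qed

lemma G2l_subset_generate:
  "G2l l \<subseteq> generate (GL2 :: ('a::{finite,field} ^ 2 ^ 2) monoid)
              ((P2 \<inter> G2l l) \<union> (P2bar \<inter> G2l l))"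
proof
  fix A :: "'a ^ 2 ^ 2"
  assume A: "A \<in> G2l l"
  obtain a b c d where A_eq: "A = mat2 a b c d"
    by (rule mat2_cases)
  show "A \<in> generate GL2 ((P2 \<inter> G2l l) \<union> (P2bar \<inter> G2l l))"
  proof (cases "c = 0")
    case False
    with A show ?thesis
      unfolding A_eq by (rule G2l_in_generate_if_lower_left_nonzero)
  next
    case True
    then have "a \<noteq> 0"
      using A by (simp add: A_eq G2l_def det_mat2)
    have "det (mat2 a b a (b + d)) = det A"
      using True by (simp add: A_eq det_mat2 algebra_simps)
    then have "mat2 a b a (b + d) \<in> generate GL2 ((P2 \<inter> G2l l) \<union> (P2bar \<inter> G2l l))"
      using A \<open>a \<noteq> 0\<close> by (intro G2l_in_generate_if_lower_left_nonzero) (simp_all add: G2l_def)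
    moreover have "A = mat2 1 0 (-1) 1 ** mat2 a b a (b + d)"
      using True by (simp add: A_eq mat2_mult)
    ultimately show ?thesis
      by (simp add: generate_GL2_mult lower_mirabolic_in_generate one_in_units_prime_to)
  qed
qed

theorem lemmaB1:
  fixes p l :: nat
  assumes "prime p" and "CHAR('a::{finite,field}) = p"
    and "prime l" and "l \<noteq> p"
  shows "generate (GL2 :: ('a ^ 2 ^ 2) monoid)
           ((P2 \<inter> G2l l) \<union> (P2bar \<inter> G2l l)) = G2l l"
proof
  interpret group "GL2 :: ('a ^ 2 ^ 2) monoid"
    by (rule GL2_group)
  show "generate (GL2 :: ('a ^ 2 ^ 2) monoid)
          ((P2 \<inter> G2l l) \<union> (P2bar \<inter> G2l l)) \<subseteq> G2l l"
    by (rule generate_subgroup_incl[OF _ G2l_subgroup]) blast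
  show "G2l l \<subseteq> generate (GL2 :: ('a ^ 2 ^ 2) monoid)
          ((P2 \<inter> G2l l) \<union> (P2bar \<inter> G2l l))"
    by (rule G2l_subset_generate)
qed

end
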